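(* Let $X,Y$ be compact metric spaces, $\epsilon\ge0$, and $X_\epsilon,Y_\epsilon$ finite $\epsilon$-nets of $X$ and $Y$ respectively. Let $n=\min\{|X_\epsilon|,|Y_\epsilon|\}$. Then $d_{\mathrm{GH}}(X,Y)\le(2n-1)\widehat{d}_{\mathrm{GH}}(X,Y)+2n\epsilon$.
   Context: An $\epsilon$-net of $X$ is a subset such that every point of $X$ is within distance $\le\epsilon$ of it. For $f:X\to Y$, $\operatorname{dis}(f)=\sup_{x,x'}|d_X(x,x')-d_Y(f(x),f(x'))|$; $\operatorname{codis}(f,g)=\sup_{x,y}|d_X(x,g(y))-d_Y(f(x),y)|$. $d_{\mathrm{GH}}$ is the Gromov--Hausdorff distance, equal to $\frac12\inf_{f,g}\max\{\operatorname{dis}(f),\operatorname{dis}(g),\operatorname{codis}(f,g)\}$; $\widehat{d}_{\mathrm{GH}}(X,Y)=\frac12\max\{\inf_{f:X\to Y}\operatorname{dis}(f),\inf_{g:Y\to X}\operatorname{dis}(g)\}$. *)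

theory Defs
  imports "HOL-Analysis.Analysis"
begin

text \<open>Metric spaces are rendered as subsets of metric-space types with the induced metric.\<close>

definition eps_net :: "'a::metric_space set \<Rightarrow> real \<Rightarrow> 'a set \<Rightarrow> bool" where
  "eps_net X \<epsilon> N \<longleftrightarrow> N \<subseteq> X \<and> (\<forall>x\<in>X. \<exists>p\<in>N. dist x p \<le> \<epsilon>)"

definition dis :: "'a::metric_space set \<Rightarrow> ('a \<Rightarrow> 'b::metric_space) \<Rightarrow> real" where
  "dis X f = (SUP p\<in>X \<times> X. \<bar>dist (fst p) (snd p) - dist (f (fst p)) (f (snd p))\<bar>)"

definition codis :: "'a::metric_space set \<Rightarrow> 'b::metric_space set
    \<Rightarrow> ('a \<Rightarrow> 'b) \<Rightarrow> ('b \<Rightarrow> 'a) \<Rightarrow> real" where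
  "codis X Y f g = (SUP p\<in>X \<times> Y. \<bar>dist (fst p) (g (snd p)) - dist (f (fst p)) (snd p)\<bar>)"

definition dGH :: "'a::metric_space set \<Rightarrow> 'b::metric_space set \<Rightarrow> real" where
  "dGH X Y = (1/2) * (INF fg\<in>(X \<rightarrow> Y) \<times> (Y \<rightarrow> X).
      max (dis X (fst fg)) (max (dis Y (snd fg)) (codis X Y (fst fg) (snd fg))))"

definition dGH_hat :: "'a::metric_space set \<Rightarrow> 'b::metric_space set \<Rightarrow> real" where
  "dGH_hat X Y = (1/2) * max (INF f\<in>(X \<rightarrow> Y). dis X f) (INF g\<in>(Y \<rightarrow> X). dis Y g)"

end

theory Submission
  imports Defs
begin

(* Let f : X \<rightarrow> Y and g : Y \<rightarrow> X have distortion at most a, where a is any number above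
   2 dGH_hat X Y. If g(Y) is r-dense in X, then g together with a nearest-point map X \<rightarrow> Y
   has distortion and codistortion at most a + 2r, so dGH X Y \<le> a/2 + r; symmetrically if
   f(X) is r-dense in Y. Suppose neither image is r-dense for r = (n - 1) a + 2 \<epsilon>, where n
   is the size of an \<epsilon>-net of X. Along the alternating images X \<supseteq> g(Y) \<supseteq> g(f(X)) \<supseteq> ...
   every set sticks out of the next one by more than r - k a, because each map loses at most
   a of any separation. For k < n this exceeds 2 \<epsilon>, so the set of net points within \<epsilon> of
   the k-th image shrinks strictly at each of the first n steps, which an \<epsilon>-net with
   n points cannot afford. *)

definition distortion_le :: "'a::metric_space set \<Rightarrow> ('a \<Rightarrow> 'b::metric_space) \<Rightarrow> real \<Rightarrow> bool" where
  "distortion_le X f c \<longleftrightarrow> (\<forall>x\<in>X. \<forall>x'\<in>X. \<bar>dist x x' - dist (f x) (f x')\<bar> \<le> c)"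

definition protrudes :: "'a::metric_space set \<Rightarrow> 'a set \<Rightarrow> real \<Rightarrow> bool" where
  "protrudes S T r \<longleftrightarrow> (\<exists>s\<in>S. \<forall>t\<in>T. r < dist s t)"

lemma distortion_le_nonneg: "distortion_le X f a \<Longrightarrow> X \<noteq> {} \<Longrightarrow> 0 \<le> a"
  unfolding distortion_le_def by fastforce

lemma distortion_le_mono: "distortion_le X f a \<Longrightarrow> a \<le> b \<Longrightarrow> distortion_le X f b"
  unfolding distortion_le_def by force

lemma distortion_le_dis:
  assumes "bounded X" "bounded (f ` X)"
  shows "distortion_le X f (dis X f)"
proof -
  obtain B1 where B1: "\<forall>x\<in>X. \<forall>x'\<in>X. dist x x' \<le> B1"
    using assms(1) bounded_two_points by blast
  obtain B2 where B2: "\<forall>x\<in>X. \<forall>x'\<in>X. dist (f x) (f x') \<le> B2"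
    using assms(2) bounded_two_points by (metis image_eqI)
  have "bdd_above ((\<lambda>p. \<bar>dist (fst p) (snd p) - dist (f (fst p)) (f (snd p))\<bar>) ` (X \<times> X))"
  proof (rule bdd_aboveI2)
    fix p assume "p \<in> X \<times> X"
    then have "dist (fst p) (snd p) \<le> B1" "dist (f (fst p)) (f (snd p)) \<le> B2"
      using B1 B2 by auto
    then show "\<bar>dist (fst p) (snd p) - dist (f (fst p)) (f (snd p))\<bar> \<le> B1 + B2"
      by (smt (verit) zero_le_dist)
  qed
  then show ?thesis unfolding distortion_le_def dis_def by (auto intro: cSUP_upper2)
qed

lemma dis_le: "X \<noteq> {} \<Longrightarrow> distortion_le X f c \<Longrightarrow> dis X f \<le> c"
  unfolding dis_def distortion_le_def by (intro cSUP_least) auto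

lemma dis_nonneg: "bounded X \<Longrightarrow> bounded (f ` X) \<Longrightarrow> X \<noteq> {} \<Longrightarrow> 0 \<le> dis X f"
  using distortion_le_dis distortion_le_nonneg by blast

lemma codis_le:
  "X \<noteq> {} \<Longrightarrow> Y \<noteq> {} \<Longrightarrow> (\<And>x y. x \<in> X \<Longrightarrow> y \<in> Y \<Longrightarrow> \<bar>dist x (g y) - dist (f x) y\<bar> \<le> c)
    \<Longrightarrow> codis X Y f g \<le> c"
  unfolding codis_def by (intro cSUP_least) auto

lemma codis_commute: "codis Y X g f = codis X Y f g"
proof -
  have "codis Y X g f = (SUP p\<in>X \<times> Y. \<bar>dist (snd p) (f (fst p)) - dist (g (snd p)) (fst p)\<bar>)"
    unfolding codis_def by (subst product_swap[symmetric]) (simp add: image_image)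
  also have "\<dots> = codis X Y f g"
    unfolding codis_def by (simp add: dist_commute abs_minus_commute)
  finally show ?thesis .
qed

lemma dGH_commute: "dGH Y X = dGH X Y"
proof -
  have swap: "(Y \<rightarrow> X) \<times> (X \<rightarrow> Y) = prod.swap ` ((X \<rightarrow> Y) \<times> (Y \<rightarrow> X))"
    by (simp only: product_swap)
  show ?thesis
    unfolding dGH_def swap image_image by (simp add: codis_commute[of X Y] max.left_commute)
qed

lemma dGH_hat_commute: "dGH_hat Y X = dGH_hat X Y"
  unfolding dGH_hat_def by (simp add: max.commute)

lemma ex_distortion_le:
  assumes "bounded X" "bounded Y" "X \<noteq> {}" "Y \<noteq> {}" "2 * dGH_hat X Y < a"
  shows "\<exists>f\<in>X \<rightarrow> Y. distortion_le X f a"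
proof -
  have bounded_image: "bounded (f ` X)" if "f \<in> X \<rightarrow> Y" for f
    using bounded_subset[OF assms(2) funcset_image[OF that]] .
  obtain y where "y \<in> Y" using assms(4) by blast
  then have "X \<rightarrow> Y \<noteq> {}" by (metis empty_iff Pi_I)
  moreover have "bdd_below ((\<lambda>f. dis X f) ` (X \<rightarrow> Y))"
    using dis_nonneg[OF assms(1) bounded_image assms(3)] by (rule bdd_belowI2)
  moreover have "(INF f\<in>X \<rightarrow> Y. dis X f) < a"
    using assms(5) unfolding dGH_hat_def by linarith
  ultimately obtain f where f: "f \<in> X \<rightarrow> Y" "dis X f < a"
    using cINF_less_iff[of "X \<rightarrow> Y" "dis X" a] by blast
  then have "distortion_le X f a"
    using distortion_le_mono[OF distortion_le_dis[OF assms(1) bounded_image[OF f(1)]]] by simp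
  with f(1) show ?thesis by blast
qed

lemma dGH_le_half:
  assumes "bounded X" "bounded Y" "X \<noteq> {}" "Y \<noteq> {}" "f \<in> X \<rightarrow> Y" "g \<in> Y \<rightarrow> X"
    and "distortion_le X f c" "distortion_le Y g c"
    and "\<And>x y. x \<in> X \<Longrightarrow> y \<in> Y \<Longrightarrow> \<bar>dist x (g y) - dist (f x) y\<bar> \<le> c"
  shows "dGH X Y \<le> c / 2"
proof -
  let ?F = "\<lambda>fg. max (dis X (fst fg)) (max (dis Y (snd fg)) (codis X Y (fst fg) (snd fg)))"
  have "0 \<le> ?F fg" if "fg \<in> (X \<rightarrow> Y) \<times> (Y \<rightarrow> X)" for fg
  proof -
    have "bounded (fst fg ` X)"
      using that bounded_subset[OF assms(2) funcset_image] by (auto simp: mem_Times_iff)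
    then have "0 \<le> dis X (fst fg)" using dis_nonneg assms(1,3) by blast
    then show ?thesis by linarith
  qed
  then have bdd: "bdd_below (?F ` ((X \<rightarrow> Y) \<times> (Y \<rightarrow> X)))" by (rule bdd_belowI2)
  have "?F (f, g) \<le> c"
    using dis_le[OF assms(3,7)] dis_le[OF assms(4,8)] codis_le[OF assms(3,4,9)] by simp
  then show ?thesis
    unfolding dGH_def using cINF_lower2[OF bdd, of "(f, g)"] assms(5,6) by simp
qed

lemma abs_dist_diff_le_dist_add: "\<bar>dist a b - dist c d\<bar> \<le> dist a c + dist b d"
  using dist_triangle[of a b c] dist_triangle[of c d a] dist_triangle[of a d b] dist_triangle[of c b d]
  by (simp add: dist_commute abs_le_iff)

lemma dGH_le_of_dense_image:
  assumes "bounded X" "bounded Y" "X \<noteq> {}" "Y \<noteq> {}" "g \<in> Y \<rightarrow> X" "distortion_le Y g a"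
    and "\<not> protrudes X (g ` Y) r"
  shows "dGH X Y \<le> a / 2 + r"
proof -
  obtain f where f: "\<forall>x\<in>X. f x \<in> Y \<and> dist x (g (f x)) \<le> r"
    using assms(7) bchoice[of X "\<lambda>x y. y \<in> Y \<and> dist x (g y) \<le> r"]
    unfolding protrudes_def by (auto simp: not_less)
  have "0 \<le> r" using f assms(3) by (meson all_not_in_conv order_trans zero_le_dist)
  have "dGH X Y \<le> (a + 2 * r) / 2"
  proof (rule dGH_le_half[OF assms(1-4) _ assms(5)])
    show "f \<in> X \<rightarrow> Y" using f by blast
    show "distortion_le Y g (a + 2 * r)"
      using distortion_le_mono[OF assms(6)] \<open>0 \<le> r\<close> by simp
    show "distortion_le X f (a + 2 * r)"
      unfolding distortion_le_def
    proof (intro ballI)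
      fix x x' assume "x \<in> X" "x' \<in> X"
      then have "\<bar>dist (f x) (f x') - dist (g (f x)) (g (f x'))\<bar> \<le> a"
        and "dist x (g (f x)) \<le> r" "dist x' (g (f x')) \<le> r"
        using f assms(6) unfolding distortion_le_def by auto
      with abs_dist_diff_le_dist_add[of x x' "g (f x)" "g (f x')"]
      show "\<bar>dist x x' - dist (f x) (f x')\<bar> \<le> a + 2 * r" by linarith
    qed
    fix x y assume "x \<in> X" "y \<in> Y"
    then have "\<bar>dist (f x) y - dist (g (f x)) (g y)\<bar> \<le> a" "dist x (g (f x)) \<le> r"
      using f assms(6) unfolding distortion_le_def by auto
    moreover have "\<bar>dist x (g y) - dist (g (f x)) (g y)\<bar> \<le> dist x (g (f x))"
      using abs_dist_diff_le_dist_add[of x "g y" "g (f x)" "g y"] by simp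
    ultimately show "\<bar>dist x (g y) - dist (f x) y\<bar> \<le> a + 2 * r" by linarith
  qed
  then show ?thesis by simp
qed

lemma protrudes_mono: "protrudes S T r \<Longrightarrow> r' \<le> r \<Longrightarrow> protrudes S T r'"
  unfolding protrudes_def by force

lemma protrudes_image:
  assumes "distortion_le Y g a" "S \<subseteq> Y" "T \<subseteq> Y" "protrudes S T r"
  shows "protrudes (g ` S) (g ` T) (r - a)"
proof -
  obtain s where s: "s \<in> S" "\<forall>t\<in>T. r < dist s t"
    using assms(4) unfolding protrudes_def by blast
  have "r - a < dist (g s) (g t)" if "t \<in> T" for t
  proof -
    have "\<bar>dist s t - dist (g s) (g t)\<bar> \<le> a"
      using assms(1-3) s(1) that unfolding distortion_le_def by blast
    moreover have "r < dist s t" using s(2) that by blast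
    ultimately show ?thesis by linarith
  qed
  then show ?thesis using s(1) unfolding protrudes_def by blast
qed

lemma protruding_chain_shorter_than_net:
  fixes A :: "nat \<Rightarrow> 'a::metric_space set"
  assumes "decseq A" "A 0 \<subseteq> X" "A (card N) \<noteq> {}" "finite N" "eps_net X \<epsilon> N"
  shows "\<exists>k<card N. \<not> protrudes (A k) (A (Suc k)) (2 * \<epsilon>)"
proof (rule ccontr)
  assume "\<not> ?thesis"
  then have protr: "protrudes (A k) (A (Suc k)) (2 * \<epsilon>)" if "k < card N" for k
    using that by blast
  define near where "near k = {p\<in>N. \<exists>s\<in>A k. dist p s \<le> \<epsilon>}" for k
  have "finite (near k)" for k unfolding near_def using assms(4) by simp
  have A_sub: "A k \<subseteq> X" for k using assms(1,2) decseqD[of A 0 k] by auto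
  have near_ne: "near k \<noteq> {}" if ne: "A k \<noteq> {}" for k
  proof -
    obtain s p where "s \<in> A k" "p \<in> N" "dist s p \<le> \<epsilon>"
      using ne A_sub assms(5) unfolding eps_net_def by blast
    then show ?thesis unfolding near_def by (auto simp: dist_commute)
  qed
  have near_shrinks: "near (Suc k) \<subset> near k" if k: "k < card N" for k
  proof
    show "near (Suc k) \<subseteq> near k"
      using assms(1) unfolding near_def decseq_Suc_iff by blast
    obtain u where u: "u \<in> A k" "\<forall>t\<in>A (Suc k). 2 * \<epsilon> < dist u t"
      using protr[OF k] unfolding protrudes_def by blast
    obtain p where p: "p \<in> N" "dist u p \<le> \<epsilon>"
      using u(1) A_sub assms(5) unfolding eps_net_def by blast
    have "p \<notin> near (Suc k)"
    proof
      assume "p \<in> near (Suc k)"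
      then obtain t where t: "t \<in> A (Suc k)" "dist p t \<le> \<epsilon>" unfolding near_def by blast
      then have "2 * \<epsilon> < dist u t" using u(2) by blast
      with t(2) p(2) dist_triangle[of u t p] show False by linarith
    qed
    moreover have "p \<in> near k" unfolding near_def using p u(1) by (auto simp: dist_commute)
    ultimately show "near (Suc k) \<noteq> near k" by blast
  qed
  have "card (near k) + k \<le> card N" if "k \<le> card N" for k
    using that
  proof (induction k)
    case 0
    then show ?case unfolding near_def using assms(4) by (simp add: card_mono)
  next
    case (Suc k)
    then show ?case
      using psubset_card_mono[OF \<open>finite (near k)\<close> near_shrinks[of k]] by simp
  qed
  from this[of "card N"] have "card (near (card N)) = 0" by simp
  then show False using near_ne[OF assms(3)] \<open>finite (near (card N))\<close> by simp
qed

fun zigzag_dom :: "('a \<Rightarrow> 'b) \<Rightarrow> ('b \<Rightarrow> 'a) \<Rightarrow> 'a set \<Rightarrow> 'b set \<Rightarrow> nat \<Rightarrow> 'a set"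
and zigzag_cod :: "('a \<Rightarrow> 'b) \<Rightarrow> ('b \<Rightarrow> 'a) \<Rightarrow> 'a set \<Rightarrow> 'b set \<Rightarrow> nat \<Rightarrow> 'b set" where
  "zigzag_dom f g X Y 0 = X"
| "zigzag_dom f g X Y (Suc k) = g ` zigzag_cod f g X Y k"
| "zigzag_cod f g X Y 0 = Y"
| "zigzag_cod f g X Y (Suc k) = f ` zigzag_dom f g X Y k"

lemma zigzag_decreasing:
  assumes "f \<in> X \<rightarrow> Y" "g \<in> Y \<rightarrow> X"
  shows "zigzag_dom f g X Y (Suc k) \<subseteq> zigzag_dom f g X Y k
    \<and> zigzag_cod f g X Y (Suc k) \<subseteq> zigzag_cod f g X Y k"
  using assms by (induction k) auto

lemma zigzag_nonempty:
  "X \<noteq> {} \<Longrightarrow> Y \<noteq> {} \<Longrightarrow> zigzag_dom f g X Y k \<noteq> {} \<and> zigzag_cod f g X Y k \<noteq> {}"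
  by (induction k) auto

lemma zigzag_protrudes:
  assumes "f \<in> X \<rightarrow> Y" "g \<in> Y \<rightarrow> X" "distortion_le X f a" "distortion_le Y g a"
    and "protrudes X (g ` Y) r" "protrudes Y (f ` X) r"
  shows "protrudes (zigzag_dom f g X Y k) (zigzag_dom f g X Y (Suc k)) (r - k * a)
    \<and> protrudes (zigzag_cod f g X Y k) (zigzag_cod f g X Y (Suc k)) (r - k * a)"
proof (induction k)
  case 0
  then show ?case using assms(5,6) by simp
next
  case (Suc k)
  have "zigzag_dom f g X Y k \<subseteq> X \<and> zigzag_cod f g X Y k \<subseteq> Y" for k
    using assms(1,2) by (induction k) auto
  with Suc have "protrudes (g ` zigzag_cod f g X Y k) (g ` zigzag_cod f g X Y (Suc k)) (r - k * a - a)"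
    and "protrudes (f ` zigzag_dom f g X Y k) (f ` zigzag_dom f g X Y (Suc k)) (r - k * a - a)"
    using protrudes_image assms(3,4) by blast+
  then show ?case by (simp add: algebra_simps)
qed

lemma one_image_dense_by_net:
  assumes "f \<in> X \<rightarrow> Y" "g \<in> Y \<rightarrow> X" "distortion_le X f a" "distortion_le Y g a"
    and "X \<noteq> {}" "Y \<noteq> {}" "finite N" "eps_net X \<epsilon> N"
  defines "r \<equiv> (real (card N) - 1) * a + 2 * \<epsilon>"
  shows "\<not> protrudes X (g ` Y) r \<or> \<not> protrudes Y (f ` X) r"
proof (rule ccontr)
  assume "\<not> ?thesis"
  then have protr: "protrudes (zigzag_dom f g X Y k) (zigzag_dom f g X Y (Suc k)) (r - k * a)" for k
    using zigzag_protrudes assms(1-4) by blast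
  have "0 \<le> a" using distortion_le_nonneg assms(3,5) by blast
  have "protrudes (zigzag_dom f g X Y k) (zigzag_dom f g X Y (Suc k)) (2 * \<epsilon>)" if "k < card N" for k
  proof (rule protrudes_mono[OF protr])
    have "real k * a \<le> (real (card N) - 1) * a"
      using that \<open>0 \<le> a\<close> by (intro mult_right_mono) auto
    then show "2 * \<epsilon> \<le> r - real k * a" unfolding r_def by linarith
  qed
  moreover have "decseq (zigzag_dom f g X Y)"
    using zigzag_decreasing assms(1,2) by (blast intro: decseq_SucI)
  ultimately show False
    using protruding_chain_shorter_than_net[OF _ _ _ assms(7,8)] zigzag_nonempty assms(5,6)
    by (metis order_refl zigzag_dom.simps(1))
qed

lemma dGH_le_by_net:
  assumes "bounded X" "bounded Y" "X \<noteq> {}" "Y \<noteq> {}" "f \<in> X \<rightarrow> Y" "g \<in> Y \<rightarrow> X"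
    and "distortion_le X f a" "distortion_le Y g a" "finite N" "eps_net X \<epsilon> N"
  shows "dGH X Y \<le> a / 2 + ((real (card N) - 1) * a + 2 * \<epsilon>)"
  using one_image_dense_by_net[OF assms(5-8,3,4,9,10)]
    dGH_le_of_dense_image[OF assms(1-4,6,8)] dGH_le_of_dense_image[OF assms(2,1,4,3,5,7)]
  unfolding dGH_commute[of Y X] by blast

lemma dGH_le_by_nets:
  assumes "bounded X" "bounded Y" "X \<noteq> {}" "Y \<noteq> {}" "f \<in> X \<rightarrow> Y" "g \<in> Y \<rightarrow> X"
    and "distortion_le X f a" "distortion_le Y g a"
    and "finite Xe" "eps_net X \<epsilon> Xe" "finite Ye" "eps_net Y \<epsilon> Ye"
  shows "dGH X Y \<le> (2 * real (min (card Xe) (card Ye)) - 1) / 2 * a + 2 * \<epsilon>"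
proof -
  have "dGH X Y \<le> a / 2 + ((real (card Xe) - 1) * a + 2 * \<epsilon>)"
    using dGH_le_by_net[OF assms(1-10)] .
  moreover have "dGH X Y \<le> a / 2 + ((real (card Ye) - 1) * a + 2 * \<epsilon>)"
    using dGH_le_by_net[OF assms(2,1,4,3,6,5,8,7,11,12)] unfolding dGH_commute[of Y X] .
  ultimately have "dGH X Y \<le> a / 2 + ((real (min (card Xe) (card Ye)) - 1) * a + 2 * \<epsilon>)"
    by (cases "card Xe \<le> card Ye") (simp_all add: min_def)
  then show ?thesis by (simp add: field_simps)
qed

theorem mainTheorem8:
  fixes X :: "'a::metric_space set" and Y :: "'b::metric_space set"
    and Xe :: "'a set" and Ye :: "'b set" and \<epsilon> :: real
  assumes "compact X" "X \<noteq> {}" "compact Y" "Y \<noteq> {}"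
    and "\<epsilon> \<ge> 0"
    and "finite Xe" "eps_net X \<epsilon> Xe"
    and "finite Ye" "eps_net Y \<epsilon> Ye"
  shows "dGH X Y \<le> (2 * real (min (card Xe) (card Ye)) - 1) * dGH_hat X Y
                   + 2 * real (min (card Xe) (card Ye)) * \<epsilon>"
proof -
  have bounded: "bounded X" "bounded Y" using assms(1,3) by (auto intro: compact_imp_bounded)
  define n where "n = min (card Xe) (card Ye)"
  have "Xe \<noteq> {}" "Ye \<noteq> {}" using assms(2,4,7,9) unfolding eps_net_def by blast+
  then have "1 \<le> n" using assms(6,8) unfolding n_def by (simp add: Suc_leI card_gt_0_iff)
  have "dGH X Y \<le> (2 * real n - 1) * dGH_hat X Y + 2 * \<epsilon> + e" if "0 < e" for e
  proof -
    define a where "a = 2 * dGH_hat X Y + 2 * e / (2 * real n - 1)"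
    have "2 * dGH_hat X Y < a" "2 * dGH_hat Y X < a"
      using that \<open>1 \<le> n\<close> unfolding a_def dGH_hat_commute[of X Y] by simp_all
    then obtain f g where "f \<in> X \<rightarrow> Y" "distortion_le X f a" "g \<in> Y \<rightarrow> X" "distortion_le Y g a"
      using ex_distortion_le[OF bounded assms(2,4)] ex_distortion_le[OF bounded(2,1) assms(4,2)]
      by blast
    then have "dGH X Y \<le> (2 * real n - 1) / 2 * a + 2 * \<epsilon>"
      using dGH_le_by_nets[OF bounded assms(2,4) _ _ _ _ assms(6-9)] unfolding n_def by blast
    also have "\<dots> = (2 * real n - 1) * dGH_hat X Y + 2 * \<epsilon> + e"
      using \<open>1 \<le> n\<close> unfolding a_def by (simp add: field_simps)
    finally show ?thesis .
  qed
  then have "dGH X Y \<le> (2 * real n - 1) * dGH_hat X Y + 2 * \<epsilon>" by (rule field_le_epsilon)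
  also have "\<dots> \<le> (2 * real n - 1) * dGH_hat X Y + 2 * real n * \<epsilon>"
    using mult_right_mono[of 1 "real n" \<epsilon>] \<open>1 \<le> n\<close> assms(5) by simp
  finally show ?thesis unfolding n_def .
qed

end
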